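(* Let $(N_m)_{m\ge0}$ be positive integers with $N_0=N$, for each $m\ge1$ let $W_m:\mathbb{R}^{N_{m-1}}\to\mathbb{C}^{N_m}$ be linear with $W_m^*W_m=\mathrm{Id}$, and for each $m\ge0$ let $A_m$ be a block-averaging operator on $\mathbb{R}^{N_m}$. Let $X$ be a random vector in $\mathbb{R}^N$ with $E(\|X\|^2)<\infty$, let $(X_m)_{m\ge0}$ be its expected scattering layers and let $(\tilde X_m)_{m\ge0}$ be its averaged scattering layers (computed realization-wise, with the same $W_m$ and the $A_m$). Then for every $m\ge0$, $$E\big(\|A_m\tilde X_m-E(X_m)\|^2\big)\le\Big(\sum_{n=0}^m E\big(\|A_nX_n-E(X_n)\|^2\big)^{1/2}\Big)^2.$$
   Context: For $z\in\mathbb{C}^n$, $|z|$ denotes the vector of coordinatewise complex moduli; $\|\cdot\|$ is the Euclidean norm. Expected scattering layers: $X_0=X$, $X_{m+1}=|W_{m+1}(X_m-E(X_m))|$. A block-averaging operator $A_m$ on $\mathbb{R}^{N_m}$ is associated with a partition $\{B_{j,m}\}_j$ of $\{1,\dots,N_m\}$ into nonempty blocks, and is defined by $(A_mv)(n)=\frac{1}{|B_{j,m}|}\sum_{k\in B_{j,m}}v(k)$ for $n\in B_{j,m}$. Averaged scattering layers: $\tilde X_0=X$, $\tilde X_{m+1}=|W_{m+1}(\tilde X_m-A_m\tilde X_m)|$. *)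

theory Defs
  imports "HOL-Probability.Probability" "HOL-Library.Disjoint_Sets"
begin

text \<open>Vectors in R^n / C^n are represented as functions on nat; only the
coordinates below n are relevant.  A real-linear map W : R^n -> C^N is
represented by its complex matrix (W i k), i < N, k < n.\<close>

definition sqnorm :: "nat \<Rightarrow> (nat \<Rightarrow> real) \<Rightarrow> real" where
  "sqnorm n v = (\<Sum>k<n. (v k)\<^sup>2)"

definition apply_mat :: "nat \<Rightarrow> nat \<Rightarrow> (nat \<Rightarrow> nat \<Rightarrow> complex) \<Rightarrow> (nat \<Rightarrow> real) \<Rightarrow> nat \<Rightarrow> complex" where
  "apply_mat n Nout W v = (\<lambda>i. if i < Nout then (\<Sum>k<n. W i k * complex_of_real (v k)) else 0)"

text \<open>W^* W = Id, with W^* the adjoint of the real-linear map W : R^n -> C^N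
(C^N carrying the real inner product Re (sum z_i * cnj w_i)).\<close>
definition adj_isometry :: "nat \<Rightarrow> nat \<Rightarrow> (nat \<Rightarrow> nat \<Rightarrow> complex) \<Rightarrow> bool" where
  "adj_isometry n Nout W \<longleftrightarrow>
     (\<forall>k<n. \<forall>l<n. Re (\<Sum>i<Nout. cnj (W i k) * W i l) = (if k = l then 1 else 0))"

definition block_avg :: "nat \<Rightarrow> nat set set \<Rightarrow> (nat \<Rightarrow> real) \<Rightarrow> nat \<Rightarrow> real" where
  "block_avg n P v = (\<lambda>i. if i < n then
       (let B = (THE B. B \<in> P \<and> i \<in> B) in (\<Sum>k\<in>B. v k) / real (card B)) else 0)"

definition vexp :: "'a measure \<Rightarrow> ('a \<Rightarrow> nat \<Rightarrow> real) \<Rightarrow> nat \<Rightarrow> real" where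
  "vexp M Y = (\<lambda>k. integral\<^sup>L M (\<lambda>\<omega>. Y \<omega> k))"

fun exp_scat :: "'a measure \<Rightarrow> (nat \<Rightarrow> nat) \<Rightarrow> (nat \<Rightarrow> nat \<Rightarrow> nat \<Rightarrow> complex)
    \<Rightarrow> ('a \<Rightarrow> nat \<Rightarrow> real) \<Rightarrow> nat \<Rightarrow> 'a \<Rightarrow> nat \<Rightarrow> real" where
  "exp_scat M N W X 0 = X"
| "exp_scat M N W X (Suc m) =
     (\<lambda>\<omega> i. cmod (apply_mat (N m) (N (Suc m)) (W (Suc m))
        (\<lambda>k. exp_scat M N W X m \<omega> k - vexp M (exp_scat M N W X m) k) i))"

fun avg_scat :: "(nat \<Rightarrow> nat) \<Rightarrow> (nat \<Rightarrow> nat \<Rightarrow> nat \<Rightarrow> complex) \<Rightarrow> (nat \<Rightarrow> nat set set)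
    \<Rightarrow> ('a \<Rightarrow> nat \<Rightarrow> real) \<Rightarrow> nat \<Rightarrow> 'a \<Rightarrow> nat \<Rightarrow> real" where
  "avg_scat N W P X 0 = X"
| "avg_scat N W P X (Suc m) =
     (\<lambda>\<omega> i. cmod (apply_mat (N m) (N (Suc m)) (W (Suc m))
        (\<lambda>k. avg_scat N W P X m \<omega> k - block_avg (N m) (P m) (avg_scat N W P X m \<omega>) k) i))"

end

theory Submission
  imports Defs
begin

text \<open>Write \<open>Y\<^sub>n\<close> for the averaged layers and put \<open>e\<^sub>n = \<parallel>Y\<^sub>n - X\<^sub>n\<parallel>\<close>,
  \<open>a\<^sub>n = \<parallel>A\<^sub>n X\<^sub>n - E X\<^sub>n\<parallel>\<close> realization-wise.
  Block averaging is an orthogonal projection, so both \<open>A\<^sub>n\<close> and \<open>Id - A\<^sub>n\<close> are contractions, and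
  \<open>v \<mapsto> |W v|\<close> is 1-Lipschitz because \<open>W\<close> is an isometry.  Comparing the two recursions gives
  \<open>e\<^sub>n\<^sub>+\<^sub>1 \<le> e\<^sub>n + a\<^sub>n\<close> and \<open>\<parallel>A\<^sub>m Y\<^sub>m - E X\<^sub>m\<parallel> \<le> e\<^sub>m + a\<^sub>m\<close>, and Minkowski's inequality in
  \<open>L\<^sup>2\<close> turns these pathwise bounds into the claimed bound on the root mean squares.\<close>

lemma sqnorm_nonneg: "sqnorm n v \<ge> 0"
  unfolding sqnorm_def by (simp add: sum_nonneg)

lemma L2_set_lessThan_eq_sqrt_sqnorm: "L2_set v {..<n} = sqrt (sqnorm n v)"
  by (simp add: sqnorm_def L2_set_def)

lemma sqnorm_eq_L2_set_squared: "sqnorm n v = (L2_set v {..<n})\<^sup>2"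
  by (simp add: L2_set_lessThan_eq_sqrt_sqnorm sqnorm_nonneg)

lemma L2_set_diff_le: "L2_set (\<lambda>k. f k - g k) A \<le> L2_set f A + L2_set g A"
  using L2_set_triangle_ineq[of f "\<lambda>k. - g k" A] by (simp add: L2_set_def)

lemma sqnorm_measurable:
  assumes "\<And>k. k < n \<Longrightarrow> (\<lambda>\<omega>. Z \<omega> k) \<in> borel_measurable M"
  shows "(\<lambda>\<omega>. sqnorm n (Z \<omega>)) \<in> borel_measurable M"
  unfolding sqnorm_def using assms by (intro borel_measurable_sum borel_measurable_power) auto

lemma L2_set_measurable:
  fixes Z :: "'a \<Rightarrow> nat \<Rightarrow> real"
  assumes "\<And>k. k < n \<Longrightarrow> (\<lambda>\<omega>. Z \<omega> k) \<in> borel_measurable M"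
  shows "(\<lambda>\<omega>. L2_set (Z \<omega>) {..<n}) \<in> borel_measurable M"
proof -
  have [measurable]: "(\<lambda>\<omega>. sqnorm n (Z \<omega>)) \<in> borel_measurable M"
    by (rule sqnorm_measurable[OF assms])
  show ?thesis
    unfolding L2_set_lessThan_eq_sqrt_sqnorm by measurable
qed

lemma partition_on_the_block:
  assumes P: "partition_on {..<n} P" and B: "B \<in> P" and i: "i \<in> B"
  shows "(THE B'. B' \<in> P \<and> i \<in> B') = B"
  using B i partition_onD2[OF P] by (intro the_equality) (auto dest: disjointD)

lemma block_avg_on_block:
  assumes P: "partition_on {..<n} P" and B: "B \<in> P" and i: "i \<in> B"
  shows "block_avg n P w i = (\<Sum>k\<in>B. w k) / real (card B)"
proof -
  have "i < n" using partition_onD1[OF P] B i by auto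
  then show ?thesis
    unfolding block_avg_def Let_def partition_on_the_block[OF assms] by simp
qed

lemma block_avg_diff:
  "block_avg n P (\<lambda>k. u k - v k) i = block_avg n P u i - block_avg n P v i"
  unfolding block_avg_def Let_def by (simp add: sum_subtractf diff_divide_distrib)

lemma sum_sq_deviation_from_mean:
  fixes w :: "'a \<Rightarrow> real"
  assumes "finite B" "B \<noteq> {}"
  defines "\<mu> \<equiv> (\<Sum>k\<in>B. w k) / real (card B)"
  shows "(\<Sum>k\<in>B. \<mu>\<^sup>2 + (w k - \<mu>)\<^sup>2) = (\<Sum>k\<in>B. (w k)\<^sup>2)"
proof -
  have "(\<Sum>k\<in>B. w k) = real (card B) * \<mu>"
    using assms by (simp add: \<mu>_def)
  then have "(\<Sum>k\<in>B. 2 * \<mu>\<^sup>2 - 2 * \<mu> * w k) = 0"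
    by (simp add: sum_subtractf flip: sum_distrib_left) (simp add: power2_eq_square)
  then show ?thesis
    by (simp add: power2_diff algebra_simps sum.distrib sum_subtractf flip: sum_distrib_left)
qed

lemma sqnorm_block_avg_pythagoras:
  assumes P: "partition_on {..<n} P"
  shows "sqnorm n (block_avg n P w) + sqnorm n (\<lambda>k. w k - block_avg n P w k) = sqnorm n w"
proof -
  have U: "{..<n} = \<Union>P" using partition_onD1[OF P] .
  have fin: "\<forall>B\<in>P. finite B" using U by (metis Union_upper finite_lessThan finite_subset)
  have dis: "\<forall>A\<in>P. \<forall>B\<in>P. A \<noteq> B \<longrightarrow> A \<inter> B = {}"
    using partition_onD2[OF P] by (auto dest: disjointD)
  have block: "(\<Sum>k\<in>B. (block_avg n P w k)\<^sup>2 + (w k - block_avg n P w k)\<^sup>2) = (\<Sum>k\<in>B. (w k)\<^sup>2)"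
    if B: "B \<in> P" for B
  proof -
    have "B \<noteq> {}" using partition_onD3[OF P] B by auto
    then show ?thesis
      using sum_sq_deviation_from_mean[of B w] fin B
      by (simp add: block_avg_on_block[OF P B] cong: sum.cong)
  qed
  have "sqnorm n (block_avg n P w) + sqnorm n (\<lambda>k. w k - block_avg n P w k)
      = (\<Sum>B\<in>P. \<Sum>k\<in>B. (block_avg n P w k)\<^sup>2 + (w k - block_avg n P w k)\<^sup>2)"
    unfolding sqnorm_def U by (simp add: sum.Union_disjoint[OF fin dis] sum.distrib)
  also have "\<dots> = sqnorm n w"
    unfolding sqnorm_def U by (simp add: block sum.Union_disjoint[OF fin dis])
  finally show ?thesis .
qed

lemma L2_set_block_avg_le:
  "partition_on {..<n} P \<Longrightarrow> L2_set (block_avg n P w) {..<n} \<le> L2_set w {..<n}"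
  using sqnorm_block_avg_pythagoras[of n P w] sqnorm_nonneg[of n "\<lambda>k. w k - block_avg n P w k"]
  by (simp add: L2_set_lessThan_eq_sqrt_sqnorm)

lemma L2_set_block_residual_le:
  "partition_on {..<n} P \<Longrightarrow> L2_set (\<lambda>k. w k - block_avg n P w k) {..<n} \<le> L2_set w {..<n}"
  using sqnorm_block_avg_pythagoras[of n P w] sqnorm_nonneg[of n "block_avg n P w"]
  by (simp add: L2_set_lessThan_eq_sqrt_sqnorm)

lemma L2_set_block_avg_diff_le:
  assumes "partition_on {..<n} P"
  shows "L2_set (\<lambda>k. block_avg n P y k - c k) {..<n}
    \<le> L2_set (\<lambda>k. y k - x k) {..<n} + L2_set (\<lambda>k. block_avg n P x k - c k) {..<n}"
proof -
  have "L2_set (\<lambda>k. block_avg n P y k - c k) {..<n}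
      = L2_set (\<lambda>k. block_avg n P (\<lambda>j. y j - x j) k + (block_avg n P x k - c k)) {..<n}"
    by (simp add: block_avg_diff)
  also have "\<dots> \<le> L2_set (block_avg n P (\<lambda>j. y j - x j)) {..<n} + L2_set (\<lambda>k. block_avg n P x k - c k) {..<n}"
    by (rule L2_set_triangle_ineq)
  also have "\<dots> \<le> L2_set (\<lambda>k. y k - x k) {..<n} + L2_set (\<lambda>k. block_avg n P x k - c k) {..<n}"
    using L2_set_block_avg_le[OF assms] by simp
  finally show ?thesis .
qed

lemma L2_set_block_residual_diff_le:
  assumes "partition_on {..<n} P"
  shows "L2_set (\<lambda>k. (y k - block_avg n P y k) - (x k - c k)) {..<n}
    \<le> L2_set (\<lambda>k. y k - x k) {..<n} + L2_set (\<lambda>k. block_avg n P x k - c k) {..<n}"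
proof -
  define d where "d = (\<lambda>k. y k - x k)"
  have "L2_set (\<lambda>k. (y k - block_avg n P y k) - (x k - c k)) {..<n}
      = L2_set (\<lambda>k. (d k - block_avg n P d k) - (block_avg n P x k - c k)) {..<n}"
    by (simp add: d_def block_avg_diff algebra_simps)
  also have "\<dots> \<le> L2_set (\<lambda>k. d k - block_avg n P d k) {..<n} + L2_set (\<lambda>k. block_avg n P x k - c k) {..<n}"
    by (rule L2_set_diff_le)
  also have "\<dots> \<le> L2_set d {..<n} + L2_set (\<lambda>k. block_avg n P x k - c k) {..<n}"
    using L2_set_block_residual_le[OF assms] by simp
  finally show ?thesis by (simp add: d_def)
qed

lemma block_avg_measurable:
  assumes P: "partition_on {..<n} P"
    and Z: "\<And>k. k < n \<Longrightarrow> (\<lambda>\<omega>. Z \<omega> k) \<in> borel_measurable M"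
  shows "(\<lambda>\<omega>. block_avg n P (Z \<omega>) i) \<in> borel_measurable M"
proof (cases "i < n")
  case True
  then obtain B where B: "B \<in> P" "i \<in> B" using partition_onD1[OF P] by auto
  then have "B \<subseteq> {..<n}" using partition_onD1[OF P] by auto
  then have "(\<lambda>\<omega>. (\<Sum>k\<in>B. Z \<omega> k) / real (card B)) \<in> borel_measurable M"
    using Z by (intro borel_measurable_divide borel_measurable_sum) auto
  then show ?thesis by (simp add: block_avg_on_block[OF P B])
next
  case False
  then show ?thesis unfolding block_avg_def by simp
qed

lemma apply_mat_diff:
  "apply_mat n Nout W (\<lambda>k. u k - v k) i = apply_mat n Nout W u i - apply_mat n Nout W v i"
  unfolding apply_mat_def by (simp add: sum_subtractf algebra_simps)

lemma sqnorm_cmod_apply_mat: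
  assumes "adj_isometry n Nout W"
  shows "sqnorm Nout (\<lambda>i. cmod (apply_mat n Nout W v i)) = sqnorm n v"
proof -
  have "complex_of_real (sqnorm Nout (\<lambda>i. cmod (apply_mat n Nout W v i)))
      = (\<Sum>i<Nout. (\<Sum>k<n. W i k * of_real (v k)) * cnj (\<Sum>l<n. W i l * of_real (v l)))"
    unfolding sqnorm_def apply_mat_def of_real_sum
    by (intro sum.cong refl) (simp add: complex_norm_square del: of_real_power)
  also have "\<dots> = (\<Sum>i<Nout. \<Sum>k<n. \<Sum>l<n. of_real (v k * v l) * (cnj (W i l) * W i k))"
    by (intro sum.cong refl) (simp add: cnj_sum sum_product mult_ac)
  also have "\<dots> = (\<Sum>k<n. \<Sum>i<Nout. \<Sum>l<n. of_real (v k * v l) * (cnj (W i l) * W i k))"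
    by (rule sum.swap)
  also have "\<dots> = (\<Sum>k<n. \<Sum>l<n. of_real (v k * v l) * (\<Sum>i<Nout. cnj (W i l) * W i k))"
    by (simp only: sum.swap[where A="{..<Nout}"] sum_distrib_left)
  finally have "sqnorm Nout (\<lambda>i. cmod (apply_mat n Nout W v i))
      = Re (\<Sum>k<n. \<Sum>l<n. of_real (v k * v l) * (\<Sum>i<Nout. cnj (W i l) * W i k))"
    by (metis Re_complex_of_real)
  also have "\<dots> = (\<Sum>k<n. \<Sum>l<n. v k * v l * Re (\<Sum>i<Nout. cnj (W i l) * W i k))"
    by (simp add: Re_sum)
  also have "\<dots> = (\<Sum>k<n. \<Sum>l<n. if l = k then v k * v l else 0)"
    using assms unfolding adj_isometry_def by (intro sum.cong refl) simp
  also have "\<dots> = sqnorm n v" unfolding sqnorm_def by (simp add: power2_eq_square)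
  finally show ?thesis .
qed

lemma L2_set_cmod_apply_mat_diff_le:
  assumes "adj_isometry n Nout W"
  shows "L2_set (\<lambda>i. cmod (apply_mat n Nout W u i) - cmod (apply_mat n Nout W v i)) {..<Nout}
         \<le> L2_set (\<lambda>k. u k - v k) {..<n}"
proof -
  have "\<bar>cmod (apply_mat n Nout W u i) - cmod (apply_mat n Nout W v i)\<bar>
      \<le> cmod (apply_mat n Nout W (\<lambda>k. u k - v k) i)" for i
    unfolding apply_mat_diff by (rule norm_triangle_ineq3)
  then have "L2_set (\<lambda>i. \<bar>cmod (apply_mat n Nout W u i) - cmod (apply_mat n Nout W v i)\<bar>) {..<Nout}
      \<le> L2_set (\<lambda>i. cmod (apply_mat n Nout W (\<lambda>k. u k - v k) i)) {..<Nout}"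
    by (intro L2_set_mono) auto
  then have "L2_set (\<lambda>i. cmod (apply_mat n Nout W u i) - cmod (apply_mat n Nout W v i)) {..<Nout}
      \<le> L2_set (\<lambda>i. cmod (apply_mat n Nout W (\<lambda>k. u k - v k) i)) {..<Nout}"
    by (simp add: L2_set_def)
  also have "\<dots> = L2_set (\<lambda>k. u k - v k) {..<n}"
    by (simp add: L2_set_lessThan_eq_sqrt_sqnorm sqnorm_cmod_apply_mat[OF assms])
  finally show ?thesis .
qed

lemma cmod_apply_mat_measurable:
  assumes "\<And>k. k < n \<Longrightarrow> (\<lambda>\<omega>. Z \<omega> k) \<in> borel_measurable M"
  shows "(\<lambda>\<omega>. cmod (apply_mat n Nout W (Z \<omega>) i)) \<in> borel_measurable M"
proof -
  have "(\<lambda>\<omega>. W i k * complex_of_real (Z \<omega> k)) \<in> borel_measurable M" if "k < n" for k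
    using assms[OF that] by measurable
  then have [measurable]: "(\<lambda>\<omega>. \<Sum>k<n. W i k * complex_of_real (Z \<omega> k)) \<in> borel_measurable M"
    by (intro borel_measurable_sum) auto
  show ?thesis
    unfolding apply_mat_def by measurable
qed

lemma Peter_Paul_square_le:
  fixes u v t :: real
  assumes "t > 0"
  shows "(\<bar>u\<bar> + \<bar>v\<bar>)\<^sup>2 \<le> (1 + t) * u\<^sup>2 + (1 + 1 / t) * v\<^sup>2"
proof -
  have "0 \<le> (t * \<bar>u\<bar> - \<bar>v\<bar>)\<^sup>2 / t" using assms by simp
  also have "\<dots> = t * u\<^sup>2 + v\<^sup>2 / t - 2 * \<bar>u\<bar> * \<bar>v\<bar>"
    using assms by (simp add: field_simps power2_eq_square)
  finally show ?thesis by (simp add: power2_sum algebra_simps)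
qed

lemma sqrt_le_add_if_Peter_Paul_bounds:
  fixes a b x :: real
  assumes "0 \<le> a" "0 \<le> b"
    and bound: "\<And>t. t > 0 \<Longrightarrow> x \<le> (1 + t) * a\<^sup>2 + (1 + 1 / t) * b\<^sup>2"
  shows "sqrt x \<le> a + b"
proof (rule field_le_epsilon)
  fix e :: real assume "e > 0"
  define p q where "p = a + e / 2" and "q = b + e / 2"
  have pq: "p > 0" "q > 0" unfolding p_def q_def using assms \<open>e > 0\<close> by auto
  define t where "t = q / p" \<comment> \<open>the weight minimising \<open>(1 + t) p\<^sup>2 + (1 + 1/t) q\<^sup>2\<close>\<close>
  have t: "t > 0" unfolding t_def using pq by simp
  have "x \<le> (1 + t) * a\<^sup>2 + (1 + 1 / t) * b\<^sup>2" by (rule bound[OF t])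
  also have "\<dots> \<le> (1 + t) * p\<^sup>2 + (1 + 1 / t) * q\<^sup>2"
    unfolding p_def q_def using assms t \<open>e > 0\<close> by (intro add_mono mult_left_mono power_mono) auto
  also have "\<dots> = (p + q)\<^sup>2"
    unfolding t_def using pq by (simp add: field_simps power2_eq_square)
  finally have "sqrt x \<le> sqrt ((p + q)\<^sup>2)" by (rule real_sqrt_le_mono)
  then show "sqrt x \<le> a + b + e"
    using pq by (simp add: p_def q_def)
qed

lemma
  fixes f g h :: "'a \<Rightarrow> real"
  assumes [measurable]: "h \<in> borel_measurable M"
    and dominated: "\<And>x. \<bar>h x\<bar> \<le> \<bar>f x\<bar> + \<bar>g x\<bar>"
    and f: "integrable M (\<lambda>x. (f x)\<^sup>2)" and g: "integrable M (\<lambda>x. (g x)\<^sup>2)"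
  shows integrable_square_if_dominated: "integrable M (\<lambda>x. (h x)\<^sup>2)"
    and sqrt_integral_square_triangle:
      "sqrt (integral\<^sup>L M (\<lambda>x. (h x)\<^sup>2))
        \<le> sqrt (integral\<^sup>L M (\<lambda>x. (f x)\<^sup>2)) + sqrt (integral\<^sup>L M (\<lambda>x. (g x)\<^sup>2))"
proof -
  have pointwise: "(h x)\<^sup>2 \<le> (1 + t) * (f x)\<^sup>2 + (1 + 1 / t) * (g x)\<^sup>2" if "t > 0" for x t
  proof -
    have "(h x)\<^sup>2 \<le> (\<bar>f x\<bar> + \<bar>g x\<bar>)\<^sup>2"
      using power_mono[OF dominated[of x] abs_ge_zero, of 2] by simp
    also have "\<dots> \<le> (1 + t) * (f x)\<^sup>2 + (1 + 1 / t) * (g x)\<^sup>2"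
      by (rule Peter_Paul_square_le[OF that])
    finally show ?thesis .
  qed
  show h: "integrable M (\<lambda>x. (h x)\<^sup>2)"
    by (rule Bochner_Integration.integrable_bound[where f="\<lambda>x. 2 * (f x)\<^sup>2 + 2 * (g x)\<^sup>2"])
       (use f g pointwise[of 1] in auto)
  define a b where "a = sqrt (integral\<^sup>L M (\<lambda>x. (f x)\<^sup>2))"
    and "b = sqrt (integral\<^sup>L M (\<lambda>x. (g x)\<^sup>2))"
  have a: "a\<^sup>2 = integral\<^sup>L M (\<lambda>x. (f x)\<^sup>2)" and b: "b\<^sup>2 = integral\<^sup>L M (\<lambda>x. (g x)\<^sup>2)"
    unfolding a_def b_def by (simp_all add: integral_nonneg)
  have "sqrt (integral\<^sup>L M (\<lambda>x. (h x)\<^sup>2)) \<le> a + b"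
  proof (rule sqrt_le_add_if_Peter_Paul_bounds)
    fix t :: real assume t: "t > 0"
    have "integral\<^sup>L M (\<lambda>x. (h x)\<^sup>2) \<le> integral\<^sup>L M (\<lambda>x. (1 + t) * (f x)\<^sup>2 + (1 + 1 / t) * (g x)\<^sup>2)"
      using h f g pointwise[OF t] by (intro integral_mono) auto
    also have "\<dots> = (1 + t) * a\<^sup>2 + (1 + 1 / t) * b\<^sup>2"
      unfolding a b using f g by simp
    finally show "integral\<^sup>L M (\<lambda>x. (h x)\<^sup>2) \<le> (1 + t) * a\<^sup>2 + (1 + 1 / t) * b\<^sup>2" .
  qed (simp_all add: a_def b_def)
  then show "sqrt (integral\<^sup>L M (\<lambda>x. (h x)\<^sup>2))
        \<le> sqrt (integral\<^sup>L M (\<lambda>x. (f x)\<^sup>2)) + sqrt (integral\<^sup>L M (\<lambda>x. (g x)\<^sup>2))"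
    unfolding a_def b_def .
qed

locale scattering_network = prob_space M
  for M :: "'a measure" +
  fixes N :: "nat \<Rightarrow> nat" and W :: "nat \<Rightarrow> nat \<Rightarrow> nat \<Rightarrow> complex"
    and P :: "nat \<Rightarrow> nat set set" and X :: "'a \<Rightarrow> nat \<Rightarrow> real"
  assumes isometry: "\<And>j. j \<ge> 1 \<Longrightarrow> adj_isometry (N (j - 1)) (N j) (W j)"
    and partition: "\<And>j. partition_on {..<N j} (P j)"
    and input_measurable: "\<And>k. k < N 0 \<Longrightarrow> (\<lambda>\<omega>. X \<omega> k) \<in> borel_measurable M"
    and input_square_integrable: "integrable M (\<lambda>\<omega>. sqnorm (N 0) (X \<omega>))"
begin

abbreviation "Xe \<equiv> exp_scat M N W X"
abbreviation "Xa \<equiv> avg_scat N W P X"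
abbreviation "A n \<equiv> block_avg (N n) (P n)"

definition estimation_error :: "nat \<Rightarrow> 'a \<Rightarrow> real" where
  "estimation_error n \<omega> = L2_set (\<lambda>k. A n (Xe n \<omega>) k - vexp M (Xe n) k) {..<N n}"

definition layer_gap :: "nat \<Rightarrow> 'a \<Rightarrow> real" where
  "layer_gap n \<omega> = L2_set (\<lambda>k. Xa n \<omega> k - Xe n \<omega> k) {..<N n}"

lemma isometry_Suc: "adj_isometry (N n) (N (Suc n)) (W (Suc n))"
  using isometry[of "Suc n"] by simp

lemma exp_scat_measurable: "k < N n \<Longrightarrow> (\<lambda>\<omega>. Xe n \<omega> k) \<in> borel_measurable M"
proof (induction n arbitrary: k)
  case 0
  then show ?case using input_measurable by simp
next
  case (Suc n)
  show ?case
    by (simp only: exp_scat.simps, rule cmod_apply_mat_measurable) (use Suc.IH in simp)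
qed

lemma avg_scat_measurable: "k < N n \<Longrightarrow> (\<lambda>\<omega>. Xa n \<omega> k) \<in> borel_measurable M"
proof (induction n arbitrary: k)
  case 0
  then show ?case using input_measurable by simp
next
  case (Suc n)
  show ?case
    by (simp only: avg_scat.simps, rule cmod_apply_mat_measurable)
       (use Suc.IH block_avg_measurable[OF partition Suc.IH] in \<open>auto intro!: borel_measurable_diff\<close>)
qed

lemma block_avg_exp_scat_measurable: "(\<lambda>\<omega>. A n (Xe n \<omega>) i) \<in> borel_measurable M"
  by (rule block_avg_measurable[OF partition exp_scat_measurable])

lemma block_avg_avg_scat_measurable: "(\<lambda>\<omega>. A n (Xa n \<omega>) i) \<in> borel_measurable M"
  by (rule block_avg_measurable[OF partition avg_scat_measurable])

lemma estimation_error_measurable: "estimation_error n \<in> borel_measurable M"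
  unfolding estimation_error_def[abs_def]
  by (rule L2_set_measurable)
     (use block_avg_exp_scat_measurable in \<open>auto intro!: borel_measurable_diff\<close>)

lemma layer_gap_measurable: "layer_gap n \<in> borel_measurable M"
  unfolding layer_gap_def[abs_def]
  by (rule L2_set_measurable) (use exp_scat_measurable avg_scat_measurable in auto)

lemma integrable_sqnorm_exp_scat: "integrable M (\<lambda>\<omega>. sqnorm (N n) (Xe n \<omega>))"
proof (induction n)
  case 0
  then show ?case using input_square_integrable by simp
next
  case (Suc n)
  let ?c = "vexp M (Xe n)"
  have "integrable M (\<lambda>\<omega>. (L2_set (\<lambda>k. Xe n \<omega> k - ?c k) {..<N n})\<^sup>2)"
  proof (rule integrable_square_if_dominated)
    show "(\<lambda>\<omega>. L2_set (\<lambda>k. Xe n \<omega> k - ?c k) {..<N n}) \<in> borel_measurable M"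
      by (rule L2_set_measurable) (auto intro!: borel_measurable_diff exp_scat_measurable)
    show "\<bar>L2_set (\<lambda>k. Xe n \<omega> k - ?c k) {..<N n}\<bar>
        \<le> \<bar>L2_set (Xe n \<omega>) {..<N n}\<bar> + \<bar>L2_set ?c {..<N n}\<bar>" for \<omega>
      using L2_set_diff_le[of "Xe n \<omega>" ?c "{..<N n}"] by simp
  qed (use Suc.IH in \<open>simp_all flip: sqnorm_eq_L2_set_squared\<close>)
  then show ?case
    by (simp add: sqnorm_cmod_apply_mat[OF isometry_Suc] flip: sqnorm_eq_L2_set_squared)
qed

lemma integrable_estimation_error_squared: "integrable M (\<lambda>\<omega>. (estimation_error n \<omega>)\<^sup>2)"
proof (rule integrable_square_if_dominated)
  let ?c = "vexp M (Xe n)"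
  show "\<bar>estimation_error n \<omega>\<bar> \<le> \<bar>L2_set (Xe n \<omega>) {..<N n}\<bar> + \<bar>L2_set ?c {..<N n}\<bar>" for \<omega>
    using L2_set_diff_le[of "A n (Xe n \<omega>)" ?c "{..<N n}"] L2_set_block_avg_le[OF partition, of n "Xe n \<omega>"]
    by (simp add: estimation_error_def)
qed (use integrable_sqnorm_exp_scat estimation_error_measurable in \<open>simp_all flip: sqnorm_eq_L2_set_squared\<close>)

lemma layer_gap_Suc_le: "layer_gap (Suc n) \<omega> \<le> layer_gap n \<omega> + estimation_error n \<omega>"
proof -
  have "layer_gap (Suc n) \<omega>
      \<le> L2_set (\<lambda>k. (Xa n \<omega> k - A n (Xa n \<omega>) k) - (Xe n \<omega> k - vexp M (Xe n) k)) {..<N n}"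
    unfolding layer_gap_def by (simp only: exp_scat.simps avg_scat.simps)
      (rule L2_set_cmod_apply_mat_diff_le[OF isometry_Suc])
  also have "\<dots> \<le> layer_gap n \<omega> + estimation_error n \<omega>"
    unfolding layer_gap_def estimation_error_def by (rule L2_set_block_residual_diff_le[OF partition])
  finally show ?thesis .
qed

lemma block_avg_avg_scat_deviation_le:
  "L2_set (\<lambda>k. A n (Xa n \<omega>) k - vexp M (Xe n) k) {..<N n} \<le> layer_gap n \<omega> + estimation_error n \<omega>"
  unfolding layer_gap_def estimation_error_def by (rule L2_set_block_avg_diff_le[OF partition])

lemma layer_gap_L2_le:
  "integrable M (\<lambda>\<omega>. (layer_gap n \<omega>)\<^sup>2) \<and>
   sqrt (expectation (\<lambda>\<omega>. (layer_gap n \<omega>)\<^sup>2))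
     \<le> (\<Sum>j<n. sqrt (expectation (\<lambda>\<omega>. (estimation_error j \<omega>)\<^sup>2)))"
proof (induction n)
  case 0
  then show ?case by (simp add: layer_gap_def L2_set_0')
next
  case (Suc n)
  have dominated: "\<bar>layer_gap (Suc n) \<omega>\<bar> \<le> \<bar>layer_gap n \<omega>\<bar> + \<bar>estimation_error n \<omega>\<bar>" for \<omega>
    using layer_gap_Suc_le[of n \<omega>] by (simp add: layer_gap_def estimation_error_def)
  note triangle = integrable_square_if_dominated sqrt_integral_square_triangle
  show ?case
    using triangle[OF layer_gap_measurable dominated _ integrable_estimation_error_squared] Suc.IH
    by simp
qed

lemma block_avg_avg_scat_L2_le:
  "sqrt (expectation (\<lambda>\<omega>. sqnorm (N m) (\<lambda>k. A m (Xa m \<omega>) k - vexp M (Xe m) k)))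
     \<le> (\<Sum>n\<le>m. sqrt (expectation (\<lambda>\<omega>. (estimation_error n \<omega>)\<^sup>2)))"
proof -
  let ?h = "\<lambda>\<omega>. L2_set (\<lambda>k. A m (Xa m \<omega>) k - vexp M (Xe m) k) {..<N m}"
  have "?h \<in> borel_measurable M"
    by (rule L2_set_measurable)
       (use block_avg_avg_scat_measurable in \<open>auto intro!: borel_measurable_diff\<close>)
  moreover have "\<bar>?h \<omega>\<bar> \<le> \<bar>layer_gap m \<omega>\<bar> + \<bar>estimation_error m \<omega>\<bar>" for \<omega>
    using block_avg_avg_scat_deviation_le[of m \<omega>] by (simp add: layer_gap_def estimation_error_def)
  ultimately have "sqrt (expectation (\<lambda>\<omega>. (?h \<omega>)\<^sup>2))
      \<le> sqrt (expectation (\<lambda>\<omega>. (layer_gap m \<omega>)\<^sup>2)) + sqrt (expectation (\<lambda>\<omega>. (estimation_error m \<omega>)\<^sup>2))"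
    using layer_gap_L2_le[of m] integrable_estimation_error_squared
    by (intro sqrt_integral_square_triangle) auto
  also have "\<dots> \<le> (\<Sum>n\<le>m. sqrt (expectation (\<lambda>\<omega>. (estimation_error n \<omega>)\<^sup>2)))"
    using layer_gap_L2_le[of m] by (simp add: lessThan_Suc_atMost[symmetric])
  finally show ?thesis by (simp flip: sqnorm_eq_L2_set_squared)
qed

end

theorem proposition1:
  fixes M :: "'a measure" and N :: "nat \<Rightarrow> nat"
    and W :: "nat \<Rightarrow> nat \<Rightarrow> nat \<Rightarrow> complex" and P :: "nat \<Rightarrow> nat set set"
    and X :: "'a \<Rightarrow> nat \<Rightarrow> real" and m :: nat
  assumes "prob_space M"
    and Npos: "\<And>j. N j > 0"
    and Wiso: "\<And>j. j \<ge> 1 \<Longrightarrow> adj_isometry (N (j - 1)) (N j) (W j)"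
    and Ppart: "\<And>j. partition_on {..<N j} (P j)"
    and Xmeas: "\<And>k. k < N 0 \<Longrightarrow> (\<lambda>\<omega>. X \<omega> k) \<in> borel_measurable M"
    and Xsq: "integrable M (\<lambda>\<omega>. sqnorm (N 0) (X \<omega>))"
  shows "integral\<^sup>L M (\<lambda>\<omega>. sqnorm (N m)
            (\<lambda>k. block_avg (N m) (P m) (avg_scat N W P X m \<omega>) k
                 - vexp M (exp_scat M N W X m) k))
    \<le> (\<Sum>n\<le>m. sqrt (integral\<^sup>L M (\<lambda>\<omega>. sqnorm (N n)
            (\<lambda>k. block_avg (N n) (P n) (exp_scat M N W X n \<omega>) k
                 - vexp M (exp_scat M N W X n) k))))\<^sup>2"
proof -
  interpret scattering_network M N W P X
    using assms by (simp add: scattering_network_def scattering_network_axioms_def)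
  have "integral\<^sup>L M (\<lambda>\<omega>. sqnorm (N m) (\<lambda>k. A m (Xa m \<omega>) k - vexp M (Xe m) k))
      \<le> (\<Sum>n\<le>m. sqrt (expectation (\<lambda>\<omega>. (estimation_error n \<omega>)\<^sup>2)))\<^sup>2"
    by (rule sqrt_le_D[OF block_avg_avg_scat_L2_le])
  also have "\<dots> = (\<Sum>n\<le>m. sqrt (integral\<^sup>L M (\<lambda>\<omega>. sqnorm (N n)
            (\<lambda>k. A n (Xe n \<omega>) k - vexp M (Xe n) k))))\<^sup>2"
    unfolding estimation_error_def sqnorm_eq_L2_set_squared ..
  finally show ?thesis .
qed

end
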